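(* The para-octonionic projective plane $\mathbb O'P^2$ (with the metric below) is not locally isotropic: there exist a point $P$ and nonzero tangent vectors $v,w\in T_P\mathbb O'P^2$ with $g(v,v)=g(w,w)$ such that no local isometry fixing $P$ has differential taking $v$ to $w$.
   Context: Para-octonions $\mathbb O'=\mathbb H\oplus\mathbb H$ with product $(q_1,q_2)(p_1,p_2)=(q_1p_1+\bar p_2q_2,\ p_2q_1+q_2\bar p_1)$, conjugation $\overline{(q_1,q_2)}=(\bar q_1,-q_2)$, $\langle a,b\rangle=\mathrm{Re}(a\bar b)$, $|a|^2=\langle a,a\rangle$. $\mathbb O'P^2=\mathcal U/_\sim$ where $\mathcal U=\{(1,y,z):1+|y|^2+|z|^2>0\}\cup\{(x,1,z):|x|^2+1+|z|^2>0\}\cup\{(x,y,1):|x|^2+|y|^2+1>0\}\subset\mathbb O'^3$ and $[a,b,c]\sim[d,e,f]$ iff $(a,b,c)=(d\lambda,e\lambda,f\lambda)$ for some $\lambda$ with $|\lambda|^2>0$; charts $[1,u,v]\mapsto(u,v)$, $[u,1,v]\mapsto(u,v)$, $[u,v,1]\mapsto(u,v)$; metric of signature $(8,8)$ on each chart, for tangent vector $(du,dv)=(\xi,\eta)$: $ds^2=\frac{|\xi|^2(1+|v|^2)+|\eta|^2(1+|u|^2)-2\mathrm{Re}[(u\bar v)(\eta\bar\xi)]}{(1+|u|^2+|v|^2)^2}$. A semi-Riemannian manifold is locally isotropic if for every point $P$ and any two nonzero $v,w\in T_PM$ with $g(v,v)=g(w,w)$ there is a local isometry fixing $P$ whose differential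 at $P$ maps $v$ to $w$. *)

theory Defs
  imports "HOL-Analysis.Analysis"
begin

type_synonym quat = "real \<times> real \<times> real \<times> real"
type_synonym poct = "quat \<times> quat"

text \<open>Hamilton product of quaternions a + b i + c j + d k.\<close>
fun qmul :: "quat \<Rightarrow> quat \<Rightarrow> quat" where
  "qmul (a1, b1, c1, d1) (a2, b2, c2, d2) =
     (a1*a2 - b1*b2 - c1*c2 - d1*d2,
      a1*b2 + b1*a2 + c1*d2 - d1*c2,
      a1*c2 - b1*d2 + c1*a2 + d1*b2,
      a1*d2 + b1*c2 - c1*b2 + d1*a2)"

fun qconj :: "quat \<Rightarrow> quat" where
  "qconj (a, b, c, d) = (a, -b, -c, -d)"

fun pmul :: "poct \<Rightarrow> poct \<Rightarrow> poct" where
  "pmul (q1, q2) (p1, p2) = (qmul q1 p1 + qmul (qconj p2) q2, qmul p2 q1 + qmul q2 (qconj p1))"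

fun pconj :: "poct \<Rightarrow> poct" where
  "pconj (q1, q2) = (qconj q1, - q2)"

definition pRe :: "poct \<Rightarrow> real" where
  "pRe a = fst (fst a)"

definition pinner :: "poct \<Rightarrow> poct \<Rightarrow> real" where
  "pinner a b = pRe (pmul a (pconj b))"

definition psq :: "poct \<Rightarrow> real" where
  "psq a = pinner a a"

text \<open>Image of the chart [1,u,v] \<mapsto> (u,v): points (u,v) with 1+|u|^2+|v|^2 > 0.\<close>
definition chart_dom :: "(poct \<times> poct) set" where
  "chart_dom = {(u, v). 0 < 1 + psq u + psq v}"

text \<open>ds^2 at the point (u,v) evaluated on the tangent vector (xi,eta).\<close>
fun metric_q :: "poct \<times> poct \<Rightarrow> poct \<times> poct \<Rightarrow> real" where
  "metric_q (u, v) (\<xi>, \<eta>) =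
     (psq \<xi> * (1 + psq v) + psq \<eta> * (1 + psq u)
      - 2 * pRe (pmul (pmul u (pconj v)) (pmul \<eta> (pconj \<xi>))))
     / (1 + psq u + psq v)^2"

definition metric_g :: "poct \<times> poct \<Rightarrow> poct \<times> poct \<Rightarrow> poct \<times> poct \<Rightarrow> real" where
  "metric_g p a b = (metric_q p (a + b) - metric_q p (a - b)) / 4"

definition dirderiv :: "('a::real_normed_vector \<Rightarrow> 'b::real_normed_vector) \<Rightarrow> 'a \<Rightarrow> 'a \<Rightarrow> 'b" where
  "dirderiv f x h = vector_derivative (\<lambda>t. f (x + t *\<^sub>R h)) (at 0)"

fun iter_dd :: "('a::real_normed_vector \<Rightarrow> 'b::real_normed_vector) \<Rightarrow> 'a list \<Rightarrow> 'a \<Rightarrow> 'b" where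
  "iter_dd f [] = f"
| "iter_dd f (h # hs) = (\<lambda>x. dirderiv (iter_dd f hs) x h)"

text \<open>f is smooth on the open set S: all iterated directional derivatives exist and are
  continuous on S (in finite dimensions this is exactly C^infinity).\<close>
definition smooth_on :: "'a::euclidean_space set \<Rightarrow> ('a \<Rightarrow> 'b::real_normed_vector) \<Rightarrow> bool" where
  "smooth_on S f \<longleftrightarrow> open S \<and>
     (\<forall>hs. continuous_on S (iter_dd f hs) \<and>
        (\<forall>x\<in>S. \<forall>h. (\<lambda>t. iter_dd f hs (x + t *\<^sub>R h)) differentiable (at 0)))"

definition local_isometry_fixing ::
  "(poct \<times> poct) set \<Rightarrow> (poct \<times> poct \<Rightarrow> poct \<times> poct) \<Rightarrow> poct \<times> poct \<Rightarrow> bool" where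
  "local_isometry_fixing S f P \<longleftrightarrow>
     open S \<and> P \<in> S \<and> S \<subseteq> chart_dom \<and> f ` S \<subseteq> chart_dom \<and>
     inj_on f S \<and> open (f ` S) \<and> smooth_on S f \<and> smooth_on (f ` S) (inv_into S f) \<and>
     f P = P \<and>
     (\<forall>x\<in>S. \<forall>a b. metric_g (f x) (frechet_derivative f (at x) a) (frechet_derivative f (at x) b)
                    = metric_g x a b)"

end

theory Submission
  imports Defs
begin

text \<open>
  In the chart [1,u,v] write ds^2 at p as (g0(X,X) + N(p,X)) / (1 + g0(p,p))^2, where g0 is the flat
  split form of signature (8,8) and N(p,X) collects the terms quadratic in p. An isometry f fixing the
  origin satisfies (g0(Df a, Df a) + N(f x, Df a)) (1 + g0(x,x))^2 = (g0(a,a) + N(x,a)) (1 + g0(f x, f x))^2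
  near 0. Expanding this along x = t h up to order t^2 shows that D = Df(0) preserves g0, that the
  symmetric second derivative B is g0-orthogonal to the image of D and hence vanishes, and that
  N(Dh, Da) = N(h, a) - g0(Da, T(h,h,a)) with T the symmetric third derivative. A polarization of N
  cancels the T-terms, so the resulting form curv_form is preserved by D. It vanishes identically
  against the null vector w = (1 + e, 0), e the unit of the second quaternion factor, but not against
  the null vector v = (1, e); hence no isometry fixing 0 maps v to w.
\<close>

section \<open>Directional derivatives\<close>

lemma closed_segment_0_abs_le:
  fixes s t :: real
  assumes "s \<in> closed_segment 0 t"
  shows "\<bar>s\<bar> \<le> \<bar>t\<bar>"
  using assms by (auto simp: closed_segment_eq_real_ivl split: if_splits)

lemma dist_add_scaleR_lt:
  fixes x h k :: "'a::real_normed_vector"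
  assumes "\<bar>u\<bar> < d / (norm h + norm k + 1)" "\<bar>r\<bar> < d / (norm h + norm k + 1)"
  shows "dist (x + u *\<^sub>R h + r *\<^sub>R k) x < d"
proof -
  let ?c = "d / (norm h + norm k + 1)"
  have N: "norm h + norm k + 1 > 0"
    using norm_ge_zero[of h] norm_ge_zero[of k] by linarith
  have c: "?c > 0"
    using assms(1) by linarith
  have "dist (x + u *\<^sub>R h + r *\<^sub>R k) x \<le> \<bar>u\<bar> * norm h + \<bar>r\<bar> * norm k"
    by (simp add: dist_norm add.assoc norm_triangle_le)
  also have "\<dots> \<le> ?c * (norm h + norm k)"
    using mult_right_mono[of "\<bar>u\<bar>" ?c "norm h"] mult_right_mono[of "\<bar>r\<bar>" ?c "norm k"] assms
    by (simp add: distrib_left)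
  also have "\<dots> < ?c * (norm h + norm k + 1)"
    by (intro mult_strict_left_mono c) simp
  also have "\<dots> = d"
    using N by simp
  finally show ?thesis .
qed

lemma eventually_line_in_open:
  fixes x h :: "'a::real_normed_vector"
  assumes "open S" "x \<in> S"
  shows "\<forall>\<^sub>F t in nhds 0. x + t *\<^sub>R h \<in> S"
proof -
  have "((\<lambda>t. x + t *\<^sub>R h) \<longlongrightarrow> x + 0 *\<^sub>R h) (nhds 0)"
    by (rule tendsto_at_iff_tendsto_nhds[THEN iffD1]) (auto intro!: tendsto_eq_intros)
  from topological_tendstoD[OF this assms(1)] assms(2) show ?thesis
    by simp
qed

lemma eventually_nhds_continuous_on_dist:
  fixes F :: "'a::metric_space \<Rightarrow> 'b::metric_space"
  assumes "open S" "x \<in> S" "continuous_on S F" "e > 0"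
  shows "\<forall>\<^sub>F y in nhds x. y \<in> S \<and> dist (F y) (F x) < e"
proof -
  have "isCont F x"
    using assms(1-3) continuous_on_eq_continuous_at by blast
  then have "(F \<longlongrightarrow> F x) (nhds x)"
    unfolding isCont_def by (rule tendsto_at_iff_tendsto_nhds[THEN iffD1])
  then show ?thesis
    using assms by (intro eventually_conj eventually_nhds_in_open tendstoD)
qed

lemma norm_increment_linearization_le:
  fixes \<phi> :: "real \<Rightarrow> 'a::real_normed_vector"
  assumes der: "\<And>u. u \<in> closed_segment 0 s \<Longrightarrow> (\<phi> has_vector_derivative \<phi>' u) (at u)"
    and bnd: "\<And>u. u \<in> closed_segment 0 s \<Longrightarrow> norm (\<phi>' u - c) \<le> e"
  shows "norm (\<phi> s - \<phi> 0 - s *\<^sub>R c) \<le> \<bar>s\<bar> * e"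
proof -
  let ?\<psi> = "\<lambda>u. \<phi> u - u *\<^sub>R c"
  have "(?\<psi> has_derivative (\<lambda>d. d *\<^sub>R (\<phi>' u - c))) (at u within closed_segment 0 s)"
    if "u \<in> closed_segment 0 s" for u
  proof -
    have "(?\<psi> has_vector_derivative \<phi>' u - c) (at u)"
      using der[OF that] by (auto intro!: derivative_eq_intros)
    then show ?thesis
      unfolding has_vector_derivative_def by (rule has_derivative_at_withinI)
  qed
  moreover have "onorm (\<lambda>d. d *\<^sub>R (\<phi>' u - c)) \<le> e" if "u \<in> closed_segment 0 s" for u
    using bnd[OF that] by (simp add: onorm_scaleR_left[OF bounded_linear_ident] onorm_id)
  ultimately have "norm (?\<psi> s - ?\<psi> 0) \<le> e * norm (s - 0)"
    by (intro differentiable_bound[OF convex_closed_segment]) auto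
  then show ?thesis
    by (simp add: algebra_simps)
qed

lemma has_vector_derivative_dirderiv_line:
  fixes g :: "'a::real_normed_vector \<Rightarrow> 'b::real_normed_vector"
  assumes "(\<lambda>s. g (x + t *\<^sub>R h + s *\<^sub>R h)) differentiable (at 0)"
  shows "((\<lambda>t. g (x + t *\<^sub>R h)) has_vector_derivative dirderiv g (x + t *\<^sub>R h) h) (at t)"
proof -
  let ?y = "x + t *\<^sub>R h"
  have "((\<lambda>s. g (?y + s *\<^sub>R h)) has_vector_derivative dirderiv g ?y h) (at (t - t))"
    using assms unfolding dirderiv_def vector_derivative_works by simp
  then have "(((\<lambda>s. g (?y + s *\<^sub>R h)) \<circ> (\<lambda>s. s - t)) has_vector_derivative 1 *\<^sub>R dirderiv g ?y h) (at t)"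
    by (intro vector_diff_chain_at) (auto intro!: derivative_eq_intros)
  moreover have "(\<lambda>s. g (?y + s *\<^sub>R h)) \<circ> (\<lambda>s. s - t) = (\<lambda>s. g (x + s *\<^sub>R h))"
    by (rule ext) (simp add: algebra_simps)
  ultimately show ?thesis
    by simp
qed

lemma dirderiv_increment_le:
  fixes g :: "'a::real_normed_vector \<Rightarrow> 'b::real_normed_vector"
  assumes diff: "\<And>s. s \<in> closed_segment 0 t \<Longrightarrow> (\<lambda>r. g (x + s *\<^sub>R k + r *\<^sub>R k)) differentiable (at 0)"
    and bnd: "\<And>s. s \<in> closed_segment 0 t \<Longrightarrow> norm (dirderiv g (x + s *\<^sub>R k) k - c) \<le> e"
  shows "norm (g (x + t *\<^sub>R k) - g x - t *\<^sub>R c) \<le> \<bar>t\<bar> * e"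
  using norm_increment_linearization_le[of t "\<lambda>s. g (x + s *\<^sub>R k)" "\<lambda>s. dirderiv g (x + s *\<^sub>R k) k"]
    has_vector_derivative_dirderiv_line[OF diff] bnd
  by simp

lemma dirderiv_increment_uniform:
  fixes g :: "'a::real_normed_vector \<Rightarrow> 'b::real_normed_vector"
  assumes S: "open S" "x \<in> S"
    and diff: "\<And>y. y \<in> S \<Longrightarrow> (\<lambda>t. g (y + t *\<^sub>R k)) differentiable (at 0)"
    and cont: "continuous_on S (\<lambda>y. dirderiv g y k)"
    and e: "e > 0"
  obtains d where "d > 0"
    "\<And>u r. \<bar>u\<bar> < d \<Longrightarrow> \<bar>r\<bar> < d \<Longrightarrow> x + u *\<^sub>R h + r *\<^sub>R k \<in> S"
    "\<And>u r. \<bar>u\<bar> < d \<Longrightarrow> \<bar>r\<bar> < d \<Longrightarrow>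
      norm (g (x + u *\<^sub>R h + r *\<^sub>R k) - g (x + u *\<^sub>R h) - r *\<^sub>R dirderiv g x k) \<le> \<bar>r\<bar> * e"
proof -
  obtain d' where d': "d' > 0" "\<And>y. dist y x < d' \<Longrightarrow> y \<in> S \<and> dist (dirderiv g y k) (dirderiv g x k) < e"
    using eventually_nhds_continuous_on_dist[OF S cont e] unfolding eventually_nhds_metric by auto
  define d where "d = d' / (norm h + norm k + 1)"
  have "norm h + norm k + 1 > 0"
    using norm_ge_zero[of h] norm_ge_zero[of k] by linarith
  then have "d > 0"
    using d' by (simp add: d_def)
  have near: "x + u *\<^sub>R h + r *\<^sub>R k \<in> S \<and> dist (dirderiv g (x + u *\<^sub>R h + r *\<^sub>R k) k) (dirderiv g x k) < e"
    if "\<bar>u\<bar> < d" "\<bar>r\<bar> < d" for u r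
    using that by (intro d'(2) dist_add_scaleR_lt) (simp_all add: d_def)
  show thesis
  proof (rule that[OF \<open>d > 0\<close>])
    show "x + u *\<^sub>R h + r *\<^sub>R k \<in> S" if "\<bar>u\<bar> < d" "\<bar>r\<bar> < d" for u r
      using near[OF that] by blast
    show "norm (g (x + u *\<^sub>R h + r *\<^sub>R k) - g (x + u *\<^sub>R h) - r *\<^sub>R dirderiv g x k) \<le> \<bar>r\<bar> * e"
      if u: "\<bar>u\<bar> < d" and r: "\<bar>r\<bar> < d" for u r
    proof (rule dirderiv_increment_le)
      fix s assume "s \<in> closed_segment 0 r"
      then have "\<bar>s\<bar> < d"
        using closed_segment_0_abs_le r by fastforce
      then show "(\<lambda>t. g (x + u *\<^sub>R h + s *\<^sub>R k + t *\<^sub>R k)) differentiable (at 0)"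
        and "norm (dirderiv g (x + u *\<^sub>R h + s *\<^sub>R k) k - dirderiv g x k) \<le> e"
        using near[OF u] diff by (auto simp: dist_norm intro: less_imp_le)
    qed
  qed
qed

lemma dirderiv_scaleR:
  fixes g :: "'a::real_normed_vector \<Rightarrow> 'b::real_normed_vector"
  assumes "(\<lambda>t. g (x + t *\<^sub>R h)) differentiable (at 0)"
  shows "dirderiv g x (c *\<^sub>R h) = c *\<^sub>R dirderiv g x h"
proof -
  have "((\<lambda>s. g (x + s *\<^sub>R h)) has_vector_derivative dirderiv g x h) (at (c * 0))"
    using assms unfolding dirderiv_def vector_derivative_works by simp
  then have "(((\<lambda>s. g (x + s *\<^sub>R h)) \<circ> (\<lambda>t. c * t)) has_vector_derivative c *\<^sub>R dirderiv g x h) (at 0)"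
    by (intro vector_diff_chain_at) (auto intro!: derivative_eq_intros)
  moreover have "(\<lambda>s. g (x + s *\<^sub>R h)) \<circ> (\<lambda>t. c * t) = (\<lambda>t. g (x + t *\<^sub>R (c *\<^sub>R h)))"
    by (rule ext) (simp add: algebra_simps)
  ultimately show ?thesis
    unfolding dirderiv_def by (simp add: vector_derivative_at)
qed

lemma dirderiv_add:
  fixes g :: "'a::real_normed_vector \<Rightarrow> 'b::real_normed_vector"
  assumes S: "open S" "x \<in> S"
    and diff: "\<And>y h. y \<in> S \<Longrightarrow> (\<lambda>t. g (y + t *\<^sub>R h)) differentiable (at 0)"
    and cont: "continuous_on S (\<lambda>y. dirderiv g y k)"
  shows "dirderiv g x (h + k) = dirderiv g x h + dirderiv g x k"
proof -
  let ?L = "dirderiv g x"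
  have "((\<lambda>t. g (x + t *\<^sub>R (h + k))) has_derivative (\<lambda>t. t *\<^sub>R (?L h + ?L k))) (at 0)"
    unfolding has_derivative_at_alt
  proof (intro conjI allI impI bounded_linear_scaleR_left)
    fix e :: real assume e: "e > 0"
    have "((\<lambda>t. g (x + t *\<^sub>R h)) has_vector_derivative ?L h) (at 0)"
      using diff[OF S(2)] unfolding dirderiv_def vector_derivative_works .
    then obtain d\<^sub>1 where d\<^sub>1: "d\<^sub>1 > 0"
      "\<And>t. \<bar>t\<bar> < d\<^sub>1 \<Longrightarrow> norm (g (x + t *\<^sub>R h) - g x - t *\<^sub>R ?L h) \<le> e/2 * \<bar>t\<bar>"
      using e unfolding has_vector_derivative_def has_derivative_at_alt
      by (metis add_0_right diff_zero half_gt_zero real_norm_def scale_zero_left)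
    obtain d\<^sub>2 where d\<^sub>2: "d\<^sub>2 > 0" "\<And>t. \<bar>t\<bar> < d\<^sub>2 \<Longrightarrow>
        norm (g (x + t *\<^sub>R h + t *\<^sub>R k) - g (x + t *\<^sub>R h) - t *\<^sub>R ?L k) \<le> \<bar>t\<bar> * (e/2)"
      using dirderiv_increment_uniform[OF S diff cont, of "e/2" h] e by (metis half_gt_zero)
    have "norm (g (x + t *\<^sub>R (h + k)) - g x - t *\<^sub>R (?L h + ?L k)) \<le> e * \<bar>t\<bar>"
      if "\<bar>t\<bar> < min d\<^sub>1 d\<^sub>2" for t
      using that d\<^sub>1(2)[of t] d\<^sub>2(2)[of t]
        norm_triangle_le[of "g (x + t *\<^sub>R h + t *\<^sub>R k) - g (x + t *\<^sub>R h) - t *\<^sub>R ?L k" "g (x + t *\<^sub>R h) - g x - t *\<^sub>R ?L h"]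
      by (simp add: algebra_simps)
    then show "\<exists>d>0. \<forall>t. norm (t - 0) < d \<longrightarrow> norm (g (x + t *\<^sub>R (h + k)) - g (x + 0 *\<^sub>R (h + k))
        - (t - 0) *\<^sub>R (?L h + ?L k)) \<le> e * norm (t - 0)"
      using d\<^sub>1(1) d\<^sub>2(1) by (intro exI[of _ "min d\<^sub>1 d\<^sub>2"]) auto
  qed
  then show ?thesis
    unfolding dirderiv_def has_vector_derivative_def[symmetric] by (rule vector_derivative_at)
qed

lemma linear_dirderiv:
  fixes g :: "'a::real_normed_vector \<Rightarrow> 'b::real_normed_vector"
  assumes S: "open S" "x \<in> S"
    and diff: "\<And>y h. y \<in> S \<Longrightarrow> (\<lambda>t. g (y + t *\<^sub>R h)) differentiable (at 0)"
    and cont: "\<And>k. continuous_on S (\<lambda>y. dirderiv g y k)"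
  shows "linear (dirderiv g x)"
  by (rule linearI) (use dirderiv_add[OF S diff cont] dirderiv_scaleR[OF diff[OF S(2)]] in auto)

lemma continuous_on_Blinfun_dirderiv:
  fixes g :: "'a::euclidean_space \<Rightarrow> 'b::real_normed_vector"
  assumes S: "open S"
    and diff: "\<And>y h. y \<in> S \<Longrightarrow> (\<lambda>t. g (y + t *\<^sub>R h)) differentiable (at 0)"
    and cont: "\<And>k. continuous_on S (\<lambda>y. dirderiv g y k)"
  shows "continuous_on S (\<lambda>y. Blinfun (dirderiv g y))"
proof (rule continuous_on_blinfun_componentwise)
  fix k :: 'a
  have "dirderiv g y k = blinfun_apply (Blinfun (dirderiv g y)) k" if "y \<in> S" for y
    using linear_dirderiv[OF S that diff cont] by (simp add: bounded_linear_Blinfun_apply linear_conv_bounded_linear)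
  with cont[of k] show "continuous_on S (\<lambda>y. blinfun_apply (Blinfun (dirderiv g y)) k)"
    by (rule continuous_on_eq) simp
qed

lemma has_derivative_dirderiv:
  fixes g :: "'a::euclidean_space \<Rightarrow> 'b::real_normed_vector"
  assumes S: "open S" "x \<in> S"
    and diff: "\<And>y h. y \<in> S \<Longrightarrow> (\<lambda>t. g (y + t *\<^sub>R h)) differentiable (at 0)"
    and cont: "\<And>k. continuous_on S (\<lambda>y. dirderiv g y k)"
  shows "(g has_derivative dirderiv g x) (at x)"
proof -
  define L where "L y = Blinfun (dirderiv g y)" for y
  have L: "blinfun_apply (L y) = dirderiv g y" if "y \<in> S" for y
    using linear_dirderiv[OF S(1) that diff cont] by (simp add: L_def bounded_linear_Blinfun_apply linear_conv_bounded_linear)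
  show ?thesis
    unfolding has_derivative_at_alt
  proof (intro conjI allI impI)
    show "bounded_linear (dirderiv g x)"
      using L[OF S(2)] blinfun.bounded_linear_right by metis
    fix e :: real assume e: "e > 0"
    obtain d where d: "d > 0" "\<And>y. dist y x < d \<Longrightarrow> y \<in> S \<and> dist (L y) (L x) < e"
      using eventually_nhds_continuous_on_dist[OF S continuous_on_Blinfun_dirderiv[OF S(1) diff cont] e]
      unfolding eventually_nhds_metric L_def by auto
    have "norm (g (x + 1 *\<^sub>R (y - x)) - g x - 1 *\<^sub>R dirderiv g x (y - x)) \<le> \<bar>1\<bar> * (e * norm (y - x))"
      if y: "norm (y - x) < d" for y
    proof (rule dirderiv_increment_le)
      fix s :: real assume "s \<in> closed_segment 0 1"
      then have "norm (s *\<^sub>R (y - x)) \<le> norm (y - x)"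
        using closed_segment_0_abs_le[of s 1] by (simp add: mult_left_le_one_le)
      then have p: "x + s *\<^sub>R (y - x) \<in> S" "dist (L (x + s *\<^sub>R (y - x))) (L x) < e"
        using d(2)[of "x + s *\<^sub>R (y - x)"] y by (auto simp: dist_norm)
      then show "(\<lambda>r. g (x + s *\<^sub>R (y - x) + r *\<^sub>R (y - x))) differentiable (at 0)"
        using diff by blast
      have "norm (dirderiv g (x + s *\<^sub>R (y - x)) (y - x) - dirderiv g x (y - x))
          = norm ((L (x + s *\<^sub>R (y - x)) - L x) (y - x))"
        using L p(1) S(2) by (simp add: blinfun.diff_left)
      also have "\<dots> \<le> norm (L (x + s *\<^sub>R (y - x)) - L x) * norm (y - x)"
        by (rule norm_blinfun)
      finally show "norm (dirderiv g (x + s *\<^sub>R (y - x)) (y - x) - dirderiv g x (y - x)) \<le> e * norm (y - x)"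
        using p(2) mult_right_mono[of "norm (L (x + s *\<^sub>R (y - x)) - L x)" e "norm (y - x)"]
        by (simp add: dist_norm)
    qed
    then show "\<exists>d>0. \<forall>y. norm (y - x) < d \<longrightarrow> norm (g y - g x - dirderiv g x (y - x)) \<le> e * norm (y - x)"
      using d(1) by auto
  qed
qed

lemma second_difference_estimate:
  fixes g :: "'a::real_normed_vector \<Rightarrow> 'b::real_normed_vector"
  assumes S: "open S" "x \<in> S"
    and diff: "\<And>y h. y \<in> S \<Longrightarrow> (\<lambda>t. g (y + t *\<^sub>R h)) differentiable (at 0)"
    and diff': "\<And>y. y \<in> S \<Longrightarrow> (\<lambda>t. dirderiv g (y + t *\<^sub>R k) h) differentiable (at 0)"
    and cont: "continuous_on S (\<lambda>y. dirderiv (\<lambda>z. dirderiv g z h) y k)"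
    and e: "e > 0"
  obtains d where "d > 0" "\<And>s. \<bar>s\<bar> < d \<Longrightarrow>
    norm (g (x + s *\<^sub>R h + s *\<^sub>R k) - g (x + s *\<^sub>R h) - g (x + s *\<^sub>R k) + g x
      - (s * s) *\<^sub>R dirderiv (\<lambda>z. dirderiv g z h) x k) \<le> s * s * e"
proof -
  define G where "G z = dirderiv g z h" for z
  let ?M = "dirderiv G x k"
  obtain d where d: "d > 0" "\<And>u r. \<bar>u\<bar> < d \<Longrightarrow> \<bar>r\<bar> < d \<Longrightarrow> x + u *\<^sub>R h + r *\<^sub>R k \<in> S"
    "\<And>u r. \<bar>u\<bar> < d \<Longrightarrow> \<bar>r\<bar> < d \<Longrightarrow>
      norm (G (x + u *\<^sub>R h + r *\<^sub>R k) - G (x + u *\<^sub>R h) - r *\<^sub>R ?M) \<le> \<bar>r\<bar> * e"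
    using dirderiv_increment_uniform[OF S, of G k e h] diff' cont e unfolding G_def by auto
  have "norm ((g (x + s *\<^sub>R k + s *\<^sub>R h) - g (x + s *\<^sub>R h)) - (g (x + s *\<^sub>R k + 0 *\<^sub>R h) - g (x + 0 *\<^sub>R h))
      - s *\<^sub>R (s *\<^sub>R ?M)) \<le> \<bar>s\<bar> * (\<bar>s\<bar> * e)" if s: "\<bar>s\<bar> < d" for s
  proof (rule norm_increment_linearization_le)
    fix u assume "u \<in> closed_segment 0 s"
    then have u: "\<bar>u\<bar> < d"
      using closed_segment_0_abs_le s by fastforce
    have "x + s *\<^sub>R k + u *\<^sub>R h \<in> S" "x + u *\<^sub>R h \<in> S"
      using d(2)[OF u s] d(2)[OF u, of 0] d(1) by (simp_all add: algebra_simps)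
    then show "((\<lambda>u. g (x + s *\<^sub>R k + u *\<^sub>R h) - g (x + u *\<^sub>R h)) has_vector_derivative
        G (x + s *\<^sub>R k + u *\<^sub>R h) - G (x + u *\<^sub>R h)) (at u)"
      unfolding G_def by (intro derivative_intros has_vector_derivative_dirderiv_line) (simp_all add: diff)
    show "norm (G (x + s *\<^sub>R k + u *\<^sub>R h) - G (x + u *\<^sub>R h) - s *\<^sub>R ?M) \<le> \<bar>s\<bar> * e"
      using d(3)[OF u s] by (simp add: algebra_simps)
  qed
  then show thesis
    using d(1) unfolding G_def
    by (intro that[of d]) (simp_all add: algebra_simps abs_mult_self_eq flip: abs_mult)
qed

lemma second_difference_tendsto:
  fixes g :: "'a::real_normed_vector \<Rightarrow> 'b::real_normed_vector"
  assumes S: "open S" "x \<in> S"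
    and diff: "\<And>y h. y \<in> S \<Longrightarrow> (\<lambda>t. g (y + t *\<^sub>R h)) differentiable (at 0)"
    and diff': "\<And>y. y \<in> S \<Longrightarrow> (\<lambda>t. dirderiv g (y + t *\<^sub>R k) h) differentiable (at 0)"
    and cont: "continuous_on S (\<lambda>y. dirderiv (\<lambda>z. dirderiv g z h) y k)"
  shows "((\<lambda>s. (g (x + s *\<^sub>R h + s *\<^sub>R k) - g (x + s *\<^sub>R h) - g (x + s *\<^sub>R k) + g x) /\<^sub>R (s * s))
    \<longlongrightarrow> dirderiv (\<lambda>z. dirderiv g z h) x k) (at 0)"
proof (rule tendstoI)
  fix e :: real assume e: "e > 0"
  let ?M = "dirderiv (\<lambda>z. dirderiv g z h) x k"
  let ?\<Delta> = "\<lambda>s. g (x + s *\<^sub>R h + s *\<^sub>R k) - g (x + s *\<^sub>R h) - g (x + s *\<^sub>R k) + g x"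
  obtain d where d: "d > 0" "\<And>s. \<bar>s\<bar> < d \<Longrightarrow> norm (?\<Delta> s - (s * s) *\<^sub>R ?M) \<le> s * s * (e / 2)"
    using second_difference_estimate[OF S diff diff' cont, of "e / 2"] e by auto
  have "dist (?\<Delta> s /\<^sub>R (s * s)) ?M < e" if s: "s \<noteq> 0" "\<bar>s\<bar> < d" for s
  proof -
    have "?\<Delta> s /\<^sub>R (s * s) - ?M = (1 / (s * s)) *\<^sub>R (?\<Delta> s - (s * s) *\<^sub>R ?M)"
      using s(1) by (simp add: scaleR_diff_right inverse_eq_divide)
    then have "dist (?\<Delta> s /\<^sub>R (s * s)) ?M = norm (?\<Delta> s - (s * s) *\<^sub>R ?M) / (s * s)"
      by (simp add: dist_norm abs_mult_self_eq)
    moreover have "s * s > 0"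
      using s(1) by (metis not_real_square_gt_zero)
    ultimately have "dist (?\<Delta> s /\<^sub>R (s * s)) ?M \<le> e / 2"
      using d(2)[OF s(2)] by (simp add: divide_le_eq mult.commute)
    then show ?thesis
      using e by linarith
  qed
  then show "\<forall>\<^sub>F s in at 0. dist (?\<Delta> s /\<^sub>R (s * s)) ?M < e"
    unfolding eventually_at using d(1) by (auto simp: dist_norm)
qed

lemma dirderiv_commute:
  fixes g :: "'a::real_normed_vector \<Rightarrow> 'b::real_normed_vector"
  assumes S: "open S" "x \<in> S"
    and diff: "\<And>y h. y \<in> S \<Longrightarrow> (\<lambda>t. g (y + t *\<^sub>R h)) differentiable (at 0)"
    and diff\<^sub>1: "\<And>y. y \<in> S \<Longrightarrow> (\<lambda>t. dirderiv g (y + t *\<^sub>R k) h) differentiable (at 0)"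
    and diff\<^sub>2: "\<And>y. y \<in> S \<Longrightarrow> (\<lambda>t. dirderiv g (y + t *\<^sub>R h) k) differentiable (at 0)"
    and cont\<^sub>1: "continuous_on S (\<lambda>y. dirderiv (\<lambda>z. dirderiv g z h) y k)"
    and cont\<^sub>2: "continuous_on S (\<lambda>y. dirderiv (\<lambda>z. dirderiv g z k) y h)"
  shows "dirderiv (\<lambda>z. dirderiv g z h) x k = dirderiv (\<lambda>z. dirderiv g z k) x h"
proof (rule tendsto_unique[OF trivial_limit_at[of 0]])
  show "((\<lambda>s. (g (x + s *\<^sub>R h + s *\<^sub>R k) - g (x + s *\<^sub>R h) - g (x + s *\<^sub>R k) + g x) /\<^sub>R (s * s))
      \<longlongrightarrow> dirderiv (\<lambda>z. dirderiv g z h) x k) (at (0::real))"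
    by (rule second_difference_tendsto[OF S diff diff\<^sub>1 cont\<^sub>1])
  have "x + s *\<^sub>R k + s *\<^sub>R h = x + s *\<^sub>R h + s *\<^sub>R k" for s :: real
    by (simp add: algebra_simps)
  then show "((\<lambda>s. (g (x + s *\<^sub>R h + s *\<^sub>R k) - g (x + s *\<^sub>R h) - g (x + s *\<^sub>R k) + g x) /\<^sub>R (s * s))
      \<longlongrightarrow> dirderiv (\<lambda>z. dirderiv g z k) x h) (at 0)"
    using second_difference_tendsto[OF S diff diff\<^sub>2 cont\<^sub>2] by (simp add: algebra_simps)
qed

lemma dirderiv_cong:
  fixes g\<^sub>1 g\<^sub>2 :: "'a::real_normed_vector \<Rightarrow> 'b::real_normed_vector"
  assumes S: "open S" "x \<in> S" and eq: "\<And>y. y \<in> S \<Longrightarrow> g\<^sub>1 y = g\<^sub>2 y"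
    and diff: "(\<lambda>t. g\<^sub>1 (x + t *\<^sub>R h)) differentiable (at 0)"
  shows "dirderiv g\<^sub>1 x h = dirderiv g\<^sub>2 x h"
proof -
  have "((\<lambda>t. g\<^sub>1 (x + t *\<^sub>R h)) has_derivative (\<lambda>t. t *\<^sub>R dirderiv g\<^sub>1 x h)) (at 0)"
    using diff unfolding dirderiv_def vector_derivative_works has_vector_derivative_def .
  moreover have "\<forall>\<^sub>F t in at 0. g\<^sub>1 (x + t *\<^sub>R h) = g\<^sub>2 (x + t *\<^sub>R h)"
    using eventually_line_in_open[OF S, of h] unfolding eventually_at_filter
    by (auto elim!: eventually_mono simp: eq)
  ultimately have "((\<lambda>t. g\<^sub>2 (x + t *\<^sub>R h)) has_derivative (\<lambda>t. t *\<^sub>R dirderiv g\<^sub>1 x h)) (at 0)"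
    by (rule has_derivative_transform_eventually) (simp_all add: eq S(2))
  then have "((\<lambda>t. g\<^sub>2 (x + t *\<^sub>R h)) has_vector_derivative dirderiv g\<^sub>1 x h) (at 0)"
    unfolding has_vector_derivative_def .
  then show ?thesis
    unfolding dirderiv_def[of g\<^sub>2] by (rule vector_derivative_at[symmetric])
qed

section \<open>Smooth maps\<close>

lemma smooth_onD:
  assumes "smooth_on S f"
  shows "open S" "continuous_on S (iter_dd f hs)"
    "x \<in> S \<Longrightarrow> (\<lambda>t. iter_dd f hs (x + t *\<^sub>R h)) differentiable (at 0)"
  using assms unfolding smooth_on_def by blast+

lemma smooth_on_has_derivative:
  fixes f :: "'a::euclidean_space \<Rightarrow> 'b::real_normed_vector"
  assumes "smooth_on S f" "x \<in> S"
  shows "(iter_dd f hs has_derivative (\<lambda>h. iter_dd f (h # hs) x)) (at x)"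
  using has_derivative_dirderiv[OF smooth_onD(1)[OF assms(1)] assms(2) smooth_onD(3)[OF assms(1)], of hs]
    smooth_onD(2)[OF assms(1), of "_ # hs"]
  by simp

lemma smooth_on_iter_dd_swap:
  fixes f :: "'a::euclidean_space \<Rightarrow> 'b::real_normed_vector"
  assumes "smooth_on S f" "x \<in> S"
  shows "iter_dd f (as @ k # h # hs) x = iter_dd f (as @ h # k # hs) x"
  using assms(2)
proof (induction as arbitrary: x)
  case Nil
  show ?case
    using dirderiv_commute[OF smooth_onD(1)[OF assms(1)] Nil smooth_onD(3)[OF assms(1)], of hs k h]
      smooth_onD(3)[OF assms(1), of _ "h # hs"] smooth_onD(3)[OF assms(1), of _ "k # hs"]
      smooth_onD(2)[OF assms(1), of "k # h # hs"] smooth_onD(2)[OF assms(1), of "h # k # hs"]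
    by simp
next
  case (Cons a as)
  show ?case
    using dirderiv_cong[OF smooth_onD(1)[OF assms(1)] Cons.prems Cons.IH smooth_onD(3)[OF assms(1) Cons.prems]]
    by simp
qed

section \<open>Second-order jets of curves\<close>

definition has_jet2 :: "(real \<Rightarrow> 'a::real_normed_vector) \<Rightarrow> 'a \<Rightarrow> 'a \<Rightarrow> 'a \<Rightarrow> bool" where
  "has_jet2 \<phi> c\<^sub>0 c\<^sub>1 c\<^sub>2 \<longleftrightarrow> (\<exists>\<phi>'. (\<forall>\<^sub>F t in nhds 0. (\<phi> has_vector_derivative \<phi>' t) (at t)) \<and>
     \<phi> 0 = c\<^sub>0 \<and> \<phi>' 0 = c\<^sub>1 \<and> (\<phi>' has_vector_derivative c\<^sub>2) (at 0))"

lemma has_jet2_eq_rhs: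
  "has_jet2 \<phi> c\<^sub>0 c\<^sub>1 c\<^sub>2 \<Longrightarrow> c\<^sub>0 = d\<^sub>0 \<Longrightarrow> c\<^sub>1 = d\<^sub>1 \<Longrightarrow> c\<^sub>2 = d\<^sub>2 \<Longrightarrow> has_jet2 \<phi> d\<^sub>0 d\<^sub>1 d\<^sub>2"
  by simp

lemma has_jet2_const: "has_jet2 (\<lambda>t. c) c 0 0"
  unfolding has_jet2_def by (intro exI[of _ "\<lambda>t. 0"]) (auto intro: derivative_intros)

lemma has_jet2_ident: "has_jet2 (\<lambda>t. t) 0 1 0"
  unfolding has_jet2_def by (intro exI[of _ "\<lambda>t. 1"]) (auto intro: derivative_intros)

lemma has_jet2_linear:
  assumes "bounded_linear L" "has_jet2 \<phi> c\<^sub>0 c\<^sub>1 c\<^sub>2"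
  shows "has_jet2 (\<lambda>t. L (\<phi> t)) (L c\<^sub>0) (L c\<^sub>1) (L c\<^sub>2)"
proof -
  obtain \<phi>' where \<phi>: "\<forall>\<^sub>F t in nhds 0. (\<phi> has_vector_derivative \<phi>' t) (at t)"
      "\<phi> 0 = c\<^sub>0" "\<phi>' 0 = c\<^sub>1" "(\<phi>' has_vector_derivative c\<^sub>2) (at 0)"
    using assms(2) unfolding has_jet2_def by blast
  show ?thesis
    unfolding has_jet2_def using \<phi> bounded_linear.has_vector_derivative[OF assms(1)]
    by (intro exI[of _ "\<lambda>t. L (\<phi>' t)"]) (auto elim!: eventually_mono)
qed

lemma has_jet2_bilinear:
  fixes mul :: "'a::real_normed_vector \<Rightarrow> 'b::real_normed_vector \<Rightarrow> 'c::real_normed_vector"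
  assumes "bounded_bilinear mul" "has_jet2 \<phi> a\<^sub>0 a\<^sub>1 a\<^sub>2" "has_jet2 \<psi> b\<^sub>0 b\<^sub>1 b\<^sub>2"
  shows "has_jet2 (\<lambda>t. mul (\<phi> t) (\<psi> t)) (mul a\<^sub>0 b\<^sub>0) (mul a\<^sub>1 b\<^sub>0 + mul a\<^sub>0 b\<^sub>1)
           (mul a\<^sub>2 b\<^sub>0 + 2 *\<^sub>R mul a\<^sub>1 b\<^sub>1 + mul a\<^sub>0 b\<^sub>2)"
proof -
  interpret bounded_bilinear mul by fact
  obtain \<phi>' where \<phi>: "\<forall>\<^sub>F t in nhds 0. (\<phi> has_vector_derivative \<phi>' t) (at t)"
      "\<phi> 0 = a\<^sub>0" "\<phi>' 0 = a\<^sub>1" "(\<phi>' has_vector_derivative a\<^sub>2) (at 0)"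
    using assms(2) unfolding has_jet2_def by blast
  obtain \<psi>' where \<psi>: "\<forall>\<^sub>F t in nhds 0. (\<psi> has_vector_derivative \<psi>' t) (at t)"
      "\<psi> 0 = b\<^sub>0" "\<psi>' 0 = b\<^sub>1" "(\<psi>' has_vector_derivative b\<^sub>2) (at 0)"
    using assms(3) unfolding has_jet2_def by blast
  let ?\<chi> = "\<lambda>t. mul (\<phi> t) (\<psi>' t) + mul (\<phi>' t) (\<psi> t)"
  have "\<forall>\<^sub>F t in nhds 0. ((\<lambda>t. mul (\<phi> t) (\<psi> t)) has_vector_derivative ?\<chi> t) (at t)"
    using \<phi>(1) \<psi>(1) by eventually_elim (rule has_vector_derivative)
  moreover have "(\<phi> has_vector_derivative a\<^sub>1) (at 0)" "(\<psi> has_vector_derivative b\<^sub>1) (at 0)"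
    using eventually_nhds_x_imp_x[OF \<phi>(1)] eventually_nhds_x_imp_x[OF \<psi>(1)] \<phi>(3) \<psi>(3) by simp_all
  then have "(?\<chi> has_vector_derivative (mul (\<phi> 0) b\<^sub>2 + mul a\<^sub>1 (\<psi>' 0)) + (mul (\<phi>' 0) b\<^sub>1 + mul a\<^sub>2 (\<psi> 0))) (at 0)"
    by (intro has_vector_derivative_add has_vector_derivative \<phi>(4) \<psi>(4))
  ultimately show ?thesis
    unfolding has_jet2_def using \<phi> \<psi>
    by (intro exI[of _ ?\<chi>]) (simp add: scaleR_2 algebra_simps)
qed

lemma has_jet2_add:
  assumes "has_jet2 \<phi> a\<^sub>0 a\<^sub>1 a\<^sub>2" "has_jet2 \<psi> b\<^sub>0 b\<^sub>1 b\<^sub>2"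
  shows "has_jet2 (\<lambda>t. \<phi> t + \<psi> t) (a\<^sub>0 + b\<^sub>0) (a\<^sub>1 + b\<^sub>1) (a\<^sub>2 + b\<^sub>2)"
proof -
  obtain \<phi>' where \<phi>: "\<forall>\<^sub>F t in nhds 0. (\<phi> has_vector_derivative \<phi>' t) (at t)"
      "\<phi> 0 = a\<^sub>0" "\<phi>' 0 = a\<^sub>1" "(\<phi>' has_vector_derivative a\<^sub>2) (at 0)"
    using assms(1) unfolding has_jet2_def by blast
  obtain \<psi>' where \<psi>: "\<forall>\<^sub>F t in nhds 0. (\<psi> has_vector_derivative \<psi>' t) (at t)"
      "\<psi> 0 = b\<^sub>0" "\<psi>' 0 = b\<^sub>1" "(\<psi>' has_vector_derivative b\<^sub>2) (at 0)"
    using assms(2) unfolding has_jet2_def by blast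
  have "\<forall>\<^sub>F t in nhds 0. ((\<lambda>t. \<phi> t + \<psi> t) has_vector_derivative \<phi>' t + \<psi>' t) (at t)"
    using \<phi>(1) \<psi>(1) by eventually_elim (rule has_vector_derivative_add)
  then show ?thesis
    unfolding has_jet2_def using \<phi> \<psi>
    by (intro exI[of _ "\<lambda>t. \<phi>' t + \<psi>' t"]) (simp add: has_vector_derivative_add)
qed

lemma has_jet2_diff:
  assumes "has_jet2 \<phi> a\<^sub>0 a\<^sub>1 a\<^sub>2" "has_jet2 \<psi> b\<^sub>0 b\<^sub>1 b\<^sub>2"
  shows "has_jet2 (\<lambda>t. \<phi> t - \<psi> t) (a\<^sub>0 - b\<^sub>0) (a\<^sub>1 - b\<^sub>1) (a\<^sub>2 - b\<^sub>2)"
  using has_jet2_add[OF assms(1) has_jet2_linear[OF bounded_linear_minus[OF bounded_linear_ident] assms(2)]]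
  by simp

lemma has_vector_derivative_eventually_zero:
  assumes "(\<phi> has_vector_derivative D) (at t)" "\<forall>\<^sub>F s in nhds t. \<phi> s = 0"
  shows "D = 0"
proof -
  obtain U where U: "open U" "t \<in> U" "\<And>s. s \<in> U \<Longrightarrow> \<phi> s = 0"
    using assms(2) unfolding eventually_nhds by blast
  have "((\<lambda>s. 0) has_vector_derivative 0) (at t)"
    by (rule has_vector_derivative_const)
  then have "(\<phi> has_vector_derivative 0) (at t)"
    by (rule has_vector_derivative_transform_within_open[OF _ U(1,2)]) (simp add: U(3))
  with assms(1) show ?thesis
    by (rule vector_derivative_unique_at)
qed

lemma has_jet2_eventually_zero:
  assumes "has_jet2 \<phi> c\<^sub>0 c\<^sub>1 c\<^sub>2" "\<forall>\<^sub>F t in nhds 0. \<phi> t = 0"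
  shows "c\<^sub>0 = 0 \<and> c\<^sub>1 = 0 \<and> c\<^sub>2 = 0"
proof -
  obtain \<phi>' where \<phi>: "\<forall>\<^sub>F t in nhds 0. (\<phi> has_vector_derivative \<phi>' t) (at t)"
      "\<phi> 0 = c\<^sub>0" "\<phi>' 0 = c\<^sub>1" "(\<phi>' has_vector_derivative c\<^sub>2) (at 0)"
    using assms(1) unfolding has_jet2_def by blast
  have "\<forall>\<^sub>F t in nhds 0. \<phi>' t = 0"
    using \<phi>(1) eventually_eventually[THEN iffD2, OF assms(2)]
    by eventually_elim (rule has_vector_derivative_eventually_zero)
  moreover from this have "\<phi>' 0 = 0"
    by (rule eventually_nhds_x_imp_x)
  moreover have "\<phi> 0 = 0"
    using assms(2) by (rule eventually_nhds_x_imp_x)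
  ultimately show ?thesis
    using \<phi> has_vector_derivative_eventually_zero[OF \<phi>(4)] by simp
qed

lemma smooth_on_has_jet2:
  fixes f :: "'a::euclidean_space \<Rightarrow> 'b::real_normed_vector"
  assumes "smooth_on S f" "x \<in> S"
  shows "has_jet2 (\<lambda>t. iter_dd f hs (x + t *\<^sub>R h))
    (iter_dd f hs x) (iter_dd f (h # hs) x) (iter_dd f (h # h # hs) x)"
proof -
  have der: "((\<lambda>t. iter_dd f ks (x + t *\<^sub>R h)) has_vector_derivative iter_dd f (h # ks) (x + t *\<^sub>R h)) (at t)"
    if "x + t *\<^sub>R h \<in> S" for t ks
    using has_vector_derivative_dirderiv_line[OF smooth_onD(3)[OF assms(1) that]] by simp
  have "\<forall>\<^sub>F t in nhds 0. x + t *\<^sub>R h \<in> S"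
    by (rule eventually_line_in_open[OF smooth_onD(1)[OF assms(1)] assms(2)])
  then have "\<forall>\<^sub>F t in nhds 0. ((\<lambda>t. iter_dd f hs (x + t *\<^sub>R h)) has_vector_derivative
      iter_dd f (h # hs) (x + t *\<^sub>R h)) (at t)"
    by (rule eventually_mono) (rule der)
  then show ?thesis
    unfolding has_jet2_def using der[of 0 "h # hs"] assms(2)
    by (intro exI[of _ "\<lambda>t. iter_dd f (h # hs) (x + t *\<^sub>R h)"]) simp
qed

section \<open>Para-octonion arithmetic\<close>

lemma bounded_bilinear_qmul: "bounded_bilinear qmul"
proof -
  have "qmul (a + b) c = qmul a c + qmul b c" "qmul (r *\<^sub>R a) c = r *\<^sub>R qmul a c"
    "qmul c (a + b) = qmul c a + qmul c b" "qmul c (r *\<^sub>R a) = r *\<^sub>R qmul c a" for a b c :: quat and r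
    by (cases a rule: prod_cases4; cases b rule: prod_cases4; cases c rule: prod_cases4; simp add: algebra_simps)+
  then show ?thesis
    unfolding bilinear_conv_bounded_bilinear[symmetric] bilinear_def by (auto intro!: linearI)
qed

interpretation qmul: bounded_bilinear qmul
  by (rule bounded_bilinear_qmul)

lemma linear_qconj: "linear qconj"
proof -
  have "qconj (a + b) = qconj a + qconj b" "qconj (r *\<^sub>R a) = r *\<^sub>R qconj a" for a b :: quat and r
    by (cases a rule: prod_cases4; cases b rule: prod_cases4; simp)+
  then show ?thesis
    by (auto intro!: linearI)
qed

lemma pmul_eq_fst_snd:
  "pmul a b = (qmul (fst a) (fst b) + qmul (qconj (snd b)) (snd a), qmul (snd b) (fst a) + qmul (snd a) (qconj (fst b)))"
  by (cases a; cases b) simp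

lemma bounded_bilinear_pmul: "bounded_bilinear pmul"
proof -
  note qconj = linear_add[OF linear_qconj] linear_scale[OF linear_qconj]
  have "pmul (a + b) c = pmul a c + pmul b c" "pmul (r *\<^sub>R a) c = r *\<^sub>R pmul a c"
    "pmul c (a + b) = pmul c a + pmul c b" "pmul c (r *\<^sub>R a) = r *\<^sub>R pmul c a" for a b c :: poct and r
    unfolding pmul_eq_fst_snd by (simp_all add: qmul.bilinear_simps qconj scaleR_add_right)
  then show ?thesis
    unfolding bilinear_conv_bounded_bilinear[symmetric] bilinear_def by (auto intro!: linearI)
qed

interpretation pmul: bounded_bilinear pmul
  by (rule bounded_bilinear_pmul)

lemma linear_pconj: "linear pconj"
proof -
  have "pconj a = (qconj (fst a), - snd a)" for a
    by (cases a) simp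
  then show ?thesis
    by (auto intro!: linearI simp: linear_add[OF linear_qconj] linear_scale[OF linear_qconj])
qed

lemma linear_pRe: "linear pRe"
  by (rule linearI) (simp_all add: pRe_def)

lemmas pconj_linear_simps = linear_add[OF linear_pconj] linear_scale[OF linear_pconj] linear_0[OF linear_pconj]

lemmas pRe_linear_simps = linear_add[OF linear_pRe] linear_scale[OF linear_pRe] linear_0[OF linear_pRe]

lemma bounded_bilinear_pinner: "bounded_bilinear pinner"
proof -
  have "bilinear pinner"
    unfolding bilinear_def pinner_def
    by (intro conjI allI linearI) (simp_all add: pmul.bilinear_simps pconj_linear_simps pRe_linear_simps)
  then show ?thesis
    by (simp add: bilinear_conv_bounded_bilinear)
qed

interpretation pinner: bounded_bilinear pinner
  by (rule bounded_bilinear_pinner)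

lemma pinner_commute: "pinner a b = pinner b a"
proof -
  obtain a1 a2 a3 a4 a5 a6 a7 a8 where a: "a = ((a1, a2, a3, a4), (a5, a6, a7, a8))"
    by (metis prod.exhaust)
  obtain b1 b2 b3 b4 b5 b6 b7 b8 where b: "b = ((b1, b2, b3, b4), (b5, b6, b7, b8))"
    by (metis prod.exhaust)
  show ?thesis
    unfolding a b by (simp add: pinner_def pRe_def algebra_simps)
qed

section \<open>The metric in the chart [1,u,v]\<close>

definition mixed_term :: "poct \<Rightarrow> poct \<Rightarrow> poct \<Rightarrow> poct \<Rightarrow> real" where
  "mixed_term u v \<eta> \<xi> = pRe (pmul (pmul u (pconj v)) (pmul \<eta> (pconj \<xi>)))"

definition flat_inner :: "poct \<times> poct \<Rightarrow> poct \<times> poct \<Rightarrow> real" where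
  "flat_inner X Y = pinner (fst X) (fst Y) + pinner (snd X) (snd Y)"

definition numer_quad :: "poct \<times> poct \<Rightarrow> poct \<times> poct \<Rightarrow> real" where
  "numer_quad p X = psq (fst X) * psq (snd p) + psq (snd X) * psq (fst p)
     - 2 * mixed_term (fst p) (snd p) (snd X) (fst X)"

lemma metric_q_eq: "metric_q p X = (flat_inner X X + numer_quad p X) / (1 + flat_inner p p)\<^sup>2"
  by (cases p; cases X) (simp add: flat_inner_def numer_quad_def mixed_term_def psq_def algebra_simps)

lemma chart_dom_iff: "p \<in> chart_dom \<longleftrightarrow> 0 < 1 + flat_inner p p"
  by (cases p) (simp add: chart_dom_def flat_inner_def psq_def add.assoc)

lemma bounded_bilinear_flat_inner: "bounded_bilinear flat_inner"
proof -
  have "bilinear flat_inner"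
    unfolding bilinear_def flat_inner_def
    by (intro conjI allI linearI) (simp_all add: pinner.bilinear_simps algebra_simps)
  then show ?thesis
    by (simp add: bilinear_conv_bounded_bilinear)
qed

interpretation flat_inner: bounded_bilinear flat_inner
  by (rule bounded_bilinear_flat_inner)

lemma flat_inner_commute: "flat_inner X Y = flat_inner Y X"
  by (simp add: flat_inner_def pinner_commute)

lemma flat_inner_nondegenerate:
  assumes "\<And>Y. flat_inner X Y = 0"
  shows "X = 0"
proof -
  obtain a1 a2 a3 a4 a5 a6 a7 a8 b1 b2 b3 b4 b5 b6 b7 b8
    where X: "X = (((a1, a2, a3, a4), (a5, a6, a7, a8)), ((b1, b2, b3, b4), (b5, b6, b7, b8)))"
    by (metis prod.exhaust)
  \<comment> \<open>flipping the sign of the second quaternion of each component turns the split form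
    into the Euclidean inner product\<close>
  have "flat_inner X (((a1, a2, a3, a4), - (a5, a6, a7, a8)), ((b1, b2, b3, b4), - (b5, b6, b7, b8))) = inner X X"
    unfolding X by (simp add: flat_inner_def pinner_def pRe_def inner_prod_def algebra_simps)
  then show ?thesis
    using assms by simp
qed

lemma numer_quad_scaleR_right: "numer_quad p (c *\<^sub>R X) = c\<^sup>2 * numer_quad p X"
  by (simp add: numer_quad_def mixed_term_def psq_def pinner_def pmul.bilinear_simps pconj_linear_simps
      pRe_linear_simps power2_eq_square algebra_simps)

lemma metric_q_scaleR: "metric_q p (c *\<^sub>R X) = c\<^sup>2 * metric_q p X"
  by (simp add: metric_q_eq numer_quad_scaleR_right flat_inner.scaleR_left flat_inner.scaleR_right
      power2_eq_square algebra_simps)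

lemma metric_g_diag: "metric_g p X X = metric_q p X"
  using metric_q_scaleR[of p 2 X] metric_q_scaleR[of p 0 X]
  by (simp add: metric_g_def scaleR_2)

lemmas has_jet2_rules =
  has_jet2_add has_jet2_diff
  has_jet2_bilinear[OF bounded_bilinear_mult, simplified]
  has_jet2_bilinear[OF bounded_bilinear_pmul]
  has_jet2_linear[OF linear_pconj[unfolded linear_conv_bounded_linear]]
  has_jet2_linear[OF linear_pRe[unfolded linear_conv_bounded_linear]]
  has_jet2_linear[OF bounded_linear_fst] has_jet2_linear[OF bounded_linear_snd]
  has_jet2_bilinear[OF bounded_bilinear_scaleR has_jet2_ident has_jet2_const, simplified]
  has_jet2_const

text \<open>For \<open>y t = f (t h)\<close> and \<open>X t = Df (t h) a\<close> the curve below is the isometry condition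
  with denominators cleared.\<close>

lemma has_jet2_metric_defect:
  assumes y: "has_jet2 y 0 Y\<^sub>1 Y\<^sub>2" and X: "has_jet2 X X\<^sub>0 X\<^sub>1 X\<^sub>2"
  shows "has_jet2 (\<lambda>t. (flat_inner (X t) (X t) + numer_quad (y t) (X t)) * (1 + flat_inner (t *\<^sub>R h) (t *\<^sub>R h))\<^sup>2
        - (flat_inner a a + numer_quad (t *\<^sub>R h) a) * (1 + flat_inner (y t) (y t))\<^sup>2)
      (flat_inner X\<^sub>0 X\<^sub>0 - flat_inner a a) (2 * flat_inner X\<^sub>0 X\<^sub>1)
      (2 * flat_inner X\<^sub>0 X\<^sub>2 + 2 * flat_inner X\<^sub>1 X\<^sub>1 + 2 * numer_quad Y\<^sub>1 X\<^sub>0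
       + 4 * flat_inner X\<^sub>0 X\<^sub>0 * flat_inner h h - 2 * numer_quad h a - 4 * flat_inner a a * flat_inner Y\<^sub>1 Y\<^sub>1)"
  unfolding numer_quad_def mixed_term_def flat_inner_def psq_def pinner_def power2_eq_square
  apply (rule has_jet2_eq_rhs)
     apply (rule has_jet2_rules y X)+
    apply (simp_all add: pmul.zero_left pmul.zero_right pconj_linear_simps pRe_linear_simps)
    apply (simp_all only: pRe_linear_simps pmul.bilinear_simps pconj_linear_simps
      pinner_def[symmetric] mixed_term_def[symmetric])
    apply (simp_all add: psq_def pinner_commute algebra_simps)
  done

section \<open>Isometries fixing the origin\<close>

lemma sym_antisym_eq_0:
  fixes \<tau> :: "'a \<Rightarrow> 'a \<Rightarrow> 'a \<Rightarrow> real"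
  assumes sym: "\<And>h a b. \<tau> h a b = \<tau> a h b" and antisym: "\<And>h a b. \<tau> h a b = - \<tau> h b a"
  shows "\<tau> h a b = 0"
proof -
  have "\<tau> h a b = - \<tau> b h a"
    using antisym[of h a b] sym[of h b a] by simp
  also have "\<dots> = \<tau> a b h"
    using antisym[of b h a] sym[of b a h] by simp
  also have "\<dots> = - \<tau> h a b"
    using antisym[of a b h] sym[of a h b] by simp
  finally show ?thesis
    by simp
qed

lemma flat_isometry_inner:
  assumes "linear D" "\<And>a. flat_inner (D a) (D a) = flat_inner a a"
  shows "flat_inner (D a) (D b) = flat_inner a b"
  using assms(2)[of "a + b"] assms(2)[of a] assms(2)[of b]
  by (simp add: linear_add[OF assms(1)] flat_inner.add_left flat_inner.add_right flat_inner_commute[of b a]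
      flat_inner_commute[of "D b" "D a"])

lemma flat_isometry_surj:
  assumes "linear D" "\<And>a. flat_inner (D a) (D a) = flat_inner a a"
  shows "surj D"
proof -
  have "inj D"
  proof (rule injI)
    fix a b assume "D a = D b"
    then have "flat_inner (a - b) c = 0" for c
      using flat_isometry_inner[OF assms, of "a - b" c] by (simp add: linear_diff[OF assms(1)] flat_inner.zero_left)
    then show "a = b"
      using flat_inner_nondegenerate[of "a - b"] by simp
  qed
  then show ?thesis
    using linear_injective_imp_surjective[OF assms(1)] by simp
qed

lemma flat_orthogonal_symmetric_eq_0:
  assumes D: "linear D" "\<And>a. flat_inner (D a) (D a) = flat_inner a a"
    and B: "\<And>a. linear (\<lambda>h. B h a)" "\<And>h a. B h a = B a h" "\<And>h a. flat_inner (D a) (B h a) = 0"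
  shows "B h a = 0"
proof -
  define \<tau> where "\<tau> h a b = flat_inner (B h a) (D b)" for h a b
  have B_add: "B h (a + b) = B h a + B h b" for h a b
    using linear_add[OF B(1), of a b h] B(2)[of h "a + b"] B(2)[of a h] B(2)[of b h] by simp
  have antisym: "\<tau> h a b = - \<tau> h b a" for h a b
    using B(3)[of "a + b" h] B(3)[of a h] B(3)[of b h]
    by (simp add: \<tau>_def B_add linear_add[OF D(1)] flat_inner.add_left flat_inner.add_right
        flat_inner_commute[of "D a" "B h b"] flat_inner_commute[of "D b" "B h a"])
  have sym: "\<tau> h a b = \<tau> a h b" for h a b
    using B(2) by (simp add: \<tau>_def)
  have "flat_inner (B h a) (D b) = 0" for b
    using sym_antisym_eq_0[of \<tau>, OF sym antisym] unfolding \<tau>_def .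
  then have "flat_inner (B h a) y = 0" for y
    using surjD[OF flat_isometry_surj[OF D], of y] by auto
  then show ?thesis
    by (rule flat_inner_nondegenerate)
qed

lemma symmetric_trilinear_polarization:
  fixes G :: "'b::real_vector \<Rightarrow> 'b \<Rightarrow> real" and D :: "'a::real_vector \<Rightarrow> 'b" and T :: "'a \<Rightarrow> 'a \<Rightarrow> 'a \<Rightarrow> 'b"
  assumes G: "bilinear G" and D: "linear D"
    and T: "\<And>k a. linear (\<lambda>h. T h k a)" "\<And>h k a. T h k a = T k h a" "\<And>h k a. T h k a = T h a k"
  defines "\<sigma> \<equiv> \<lambda>h a. G (D a) (T h h a)"
  shows "8 * (\<sigma> x v + \<sigma> v x) = \<sigma> (x + v) (x + v) - \<sigma> (x + v) (x - v) - \<sigma> (x - v) (x + v) + \<sigma> (x - v) (x - v)"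
proof -
  have L: "linear (\<lambda>p. G p r)" "linear (G r)" for r
    using G by (simp_all add: bilinear_def)
  have G1: "G (p + q) r = G p r + G q r" "G (p - q) r = G p r - G q r" for p q r
    using linear_add[OF L(1)] linear_diff[OF L(1)] by blast+
  have G2: "G r (p + q) = G r p + G r q" "G r (p - q) = G r p - G r q" for p q r
    using linear_add[OF L(2)] linear_diff[OF L(2)] by blast+
  have T1: "T (p + q) k a = T p k a + T q k a" "T (p - q) k a = T p k a - T q k a" for p q k a
    using linear_add[OF T(1)] linear_diff[OF T(1)] by auto
  have T2: "T h (p + q) a = T h p a + T h q a" "T h (p - q) a = T h p a - T h q a" for p q h a
    using T1[where p=p and q=q and k=h and a=a] T(2)[of h "p + q" a] T(2)[of h "p - q" a] T(2)[of h p a] T(2)[of h q a] by simp_all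
  have T3: "T h k (p + q) = T h k p + T h k q" "T h k (p - q) = T h k p - T h k q" for p q h k
    using T2[where p=p and q=q and h=h and a=k] T(3)[of h k "p + q"] T(3)[of h k "p - q"] T(3)[of h k p] T(3)[of h k q] by simp_all
  have sym: "T v x x = T x x v" "T x v x = T x x v" "T v x v = T x v v" "T v v x = T x v v"
    using T(2)[of v x x] T(3)[of x v x] T(2)[of v x v] T(3)[of v v x] T(2)[of v x v] by simp_all
  show ?thesis
    unfolding \<sigma>_def
    by (simp only: G1 G2 linear_add[OF D] linear_diff[OF D] T1 T2 T3 sym) (simp add: algebra_simps)
qed

text \<open>The polarization is chosen so that the third-derivative terms of an isometry cancel
  (\<open>symmetric_trilinear_polarization\<close>).\<close>

definition curv_form :: "poct \<times> poct \<Rightarrow> poct \<times> poct \<Rightarrow> real" where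
  "curv_form y w = 8 * (numer_quad y w + numer_quad w y)
     - (numer_quad (y + w) (y + w) - numer_quad (y + w) (y - w) - numer_quad (y - w) (y + w)
        + numer_quad (y - w) (y - w))"

lemma curv_form_preserved:
  assumes D: "linear D" "\<And>a. flat_inner (D a) (D a) = flat_inner a a"
    and B: "\<And>a. linear (\<lambda>h. B h a)" "\<And>h a. B h a = B a h" "\<And>h a. flat_inner (D a) (B h a) = 0"
    and T: "\<And>k a. linear (\<lambda>h. T h k a)" "\<And>h k a. T h k a = T k h a" "\<And>h k a. T h k a = T h a k"
    and second_order: "\<And>h a. flat_inner (D a) (T h h a) + flat_inner (B h a) (B h a) + numer_quad (D h) (D a)
      = numer_quad h a"
  shows "curv_form (D x) (D v) = curv_form x v"
proof -
  define \<sigma> where "\<sigma> h a = flat_inner (D a) (T h h a)" for h a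
  have numer_quad_D: "numer_quad (D h) (D a) = numer_quad h a - \<sigma> h a" for h a
    using second_order[where h = h and a = a] flat_orthogonal_symmetric_eq_0[OF D B, of h a]
    by (simp add: \<sigma>_def flat_inner.zero_left)
  have "8 * (\<sigma> x v + \<sigma> v x) = \<sigma> (x + v) (x + v) - \<sigma> (x + v) (x - v) - \<sigma> (x - v) (x + v) + \<sigma> (x - v) (x - v)"
    unfolding \<sigma>_def
    by (rule symmetric_trilinear_polarization[OF _ D(1) T])
      (simp add: bilinear_conv_bounded_bilinear bounded_bilinear_flat_inner)
  moreover have "D x + D v = D (x + v)" "D x - D v = D (x - v)"
    by (simp_all add: linear_add[OF D(1)] linear_diff[OF D(1)])
  ultimately show ?thesis
    unfolding curv_form_def by (simp add: numer_quad_D)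
qed

lemma local_isometry_fixing_cross_multiplied:
  assumes iso: "local_isometry_fixing S f P" and x: "x \<in> S"
  shows "(flat_inner (iter_dd f [a] x) (iter_dd f [a] x) + numer_quad (f x) (iter_dd f [a] x)) * (1 + flat_inner x x)\<^sup>2
    = (flat_inner a a + numer_quad x a) * (1 + flat_inner (f x) (f x))\<^sup>2"
proof -
  have sm: "smooth_on S f" and dom: "x \<in> chart_dom" "f x \<in> chart_dom"
    using iso x unfolding local_isometry_fixing_def by auto
  have "metric_g (f x) (frechet_derivative f (at x) a) (frechet_derivative f (at x) a) = metric_g x a a"
    using iso x unfolding local_isometry_fixing_def by blast
  moreover have "frechet_derivative f (at x) a = iter_dd f [a] x"
    using frechet_derivative_at[OF smooth_on_has_derivative[OF sm x, of "[]"]] by simp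
  ultimately have "(flat_inner (iter_dd f [a] x) (iter_dd f [a] x) + numer_quad (f x) (iter_dd f [a] x))
      / (1 + flat_inner (f x) (f x))\<^sup>2 = (flat_inner a a + numer_quad x a) / (1 + flat_inner x x)\<^sup>2"
    by (simp add: metric_g_diag metric_q_eq)
  with dom show ?thesis
    by (simp add: chart_dom_iff field_simps)
qed

lemma local_isometry_fixing_0_derivatives:
  assumes iso: "local_isometry_fixing S f 0"
  shows "flat_inner (iter_dd f [a] 0) (iter_dd f [a] 0) = flat_inner a a"
    and "flat_inner (iter_dd f [a] 0) (iter_dd f [h, a] 0) = 0"
    and "flat_inner (iter_dd f [a] 0) (iter_dd f [h, h, a] 0) + flat_inner (iter_dd f [h, a] 0) (iter_dd f [h, a] 0)
      + numer_quad (iter_dd f [h] 0) (iter_dd f [a] 0) = numer_quad h a"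
proof -
  have S: "open S" "0 \<in> S" and sm: "smooth_on S f" and f0: "f 0 = 0"
    using iso unfolding local_isometry_fixing_def by auto
  have E: "flat_inner (iter_dd f [a] 0) (iter_dd f [a] 0) - flat_inner a a = 0
    \<and> 2 * flat_inner (iter_dd f [a] 0) (iter_dd f [h, a] 0) = 0
    \<and> 2 * flat_inner (iter_dd f [a] 0) (iter_dd f [h, h, a] 0) + 2 * flat_inner (iter_dd f [h, a] 0) (iter_dd f [h, a] 0)
      + 2 * numer_quad (iter_dd f [h] 0) (iter_dd f [a] 0)
      + 4 * flat_inner (iter_dd f [a] 0) (iter_dd f [a] 0) * flat_inner h h
      - 2 * numer_quad h a - 4 * flat_inner a a * flat_inner (iter_dd f [h] 0) (iter_dd f [h] 0) = 0" for h a
  proof (rule has_jet2_eventually_zero[OF has_jet2_metric_defect])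
    show "has_jet2 (\<lambda>t. f (t *\<^sub>R h)) 0 (iter_dd f [h] 0) (iter_dd f [h, h] 0)"
      using smooth_on_has_jet2[OF sm S(2), of "[]" h] f0 by simp
    show "has_jet2 (\<lambda>t. iter_dd f [a] (t *\<^sub>R h)) (iter_dd f [a] 0) (iter_dd f [h, a] 0) (iter_dd f [h, h, a] 0)"
      using smooth_on_has_jet2[OF sm S(2), of "[a]" h] by simp
    show "\<forall>\<^sub>F t in nhds 0.
      (flat_inner (iter_dd f [a] (t *\<^sub>R h)) (iter_dd f [a] (t *\<^sub>R h)) + numer_quad (f (t *\<^sub>R h)) (iter_dd f [a] (t *\<^sub>R h)))
        * (1 + flat_inner (t *\<^sub>R h) (t *\<^sub>R h))\<^sup>2
      - (flat_inner a a + numer_quad (t *\<^sub>R h) a) * (1 + flat_inner (f (t *\<^sub>R h)) (f (t *\<^sub>R h)))\<^sup>2 = 0"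
      using eventually_line_in_open[OF S, of h]
      by (auto elim!: eventually_mono dest: local_isometry_fixing_cross_multiplied[OF iso])
  qed
  have E\<^sub>0: "flat_inner (iter_dd f [a] 0) (iter_dd f [a] 0) = flat_inner a a" for a
    using E[where h = a and a = a] by simp
  then show "flat_inner (iter_dd f [a] 0) (iter_dd f [a] 0) = flat_inner a a" .
  show "flat_inner (iter_dd f [a] 0) (iter_dd f [h, a] 0) = 0"
    using E[where h = h and a = a] by simp
  show "flat_inner (iter_dd f [a] 0) (iter_dd f [h, h, a] 0) + flat_inner (iter_dd f [h, a] 0) (iter_dd f [h, a] 0)
      + numer_quad (iter_dd f [h] 0) (iter_dd f [a] 0) = numer_quad h a"
    using E[where h = h and a = a, THEN conjunct2, THEN conjunct2, unfolded E\<^sub>0] by linarith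
qed

lemma local_isometry_fixing_0_preserves_curv_form:
  assumes iso: "local_isometry_fixing S f 0"
  shows "curv_form (frechet_derivative f (at 0) x) (frechet_derivative f (at 0) v) = curv_form x v"
proof -
  have sm: "smooth_on S f" and S0: "0 \<in> S"
    using iso unfolding local_isometry_fixing_def by auto
  have lin: "linear (\<lambda>h. iter_dd f (h # hs) 0)" for hs
    using smooth_on_has_derivative[OF sm S0] by (rule has_derivative_linear)
  have swap: "iter_dd f (as @ k # h # hs) 0 = iter_dd f (as @ h # k # hs) 0" for as k h hs
    by (rule smooth_on_iter_dd_swap[OF sm S0])
  have "frechet_derivative f (at 0) = (\<lambda>a. iter_dd f [a] 0)"
    using frechet_derivative_at[OF smooth_on_has_derivative[OF sm S0, of "[]"]] by simp
  moreover have "curv_form (iter_dd f [x] 0) (iter_dd f [v] 0) = curv_form x v"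
  proof (rule curv_form_preserved[where B = "\<lambda>h a. iter_dd f [h, a] 0" and T = "\<lambda>h k a. iter_dd f [h, k, a] 0"])
    show "linear (\<lambda>a. iter_dd f [a] 0)"
      by (rule lin)
    show "linear (\<lambda>h. iter_dd f [h, a] 0)" "linear (\<lambda>h. iter_dd f [h, k, a] 0)" for k a
      by (rule lin)+
    show "iter_dd f [h, a] 0 = iter_dd f [a, h] 0" "iter_dd f [h, k, a] 0 = iter_dd f [k, h, a] 0"
      "iter_dd f [h, k, a] 0 = iter_dd f [h, a, k] 0" for h k a
      using swap[of "[]" h a "[]"] swap[of "[]" h k "[a]"] swap[of "[h]" k a "[]"] by simp_all
  qed (use local_isometry_fixing_0_derivatives[OF iso] in simp_all)
  ultimately show ?thesis
    by simp
qed

lemma mixed_term_simps: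
  "mixed_term (a + b) v \<eta> d = mixed_term a v \<eta> d + mixed_term b v \<eta> d"
  "mixed_term (a - b) v \<eta> d = mixed_term a v \<eta> d - mixed_term b v \<eta> d"
  "mixed_term a v \<eta> (d + e) = mixed_term a v \<eta> d + mixed_term a v \<eta> e"
  "mixed_term a v \<eta> (d - e) = mixed_term a v \<eta> d - mixed_term a v \<eta> e"
  "mixed_term a 0 \<eta> d = 0" "mixed_term a v 0 d = 0"
  by (simp_all add: mixed_term_def pmul.bilinear_simps pconj_linear_simps linear_diff[OF linear_pconj]
      pRe_linear_simps linear_diff[OF linear_pRe])

lemma curv_form_Pair_0_right: "curv_form y (u, 0) = 16 * psq u * psq (snd y) + 8 * mixed_term u (snd y) (snd y) u"
  by (cases y) (simp add: curv_form_def numer_quad_def mixed_term_simps psq_def pinner.zero_left algebra_simps)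

lemma curv_form_null_right: "curv_form y (((1, 0, 0, 0), (1, 0, 0, 0)), 0) = 0"
proof -
  obtain z1 z2 z3 z4 z5 z6 z7 z8 where "snd y = ((z1, z2, z3, z4), (z5, z6, z7, z8))"
    by (metis prod.exhaust)
  then show ?thesis
    by (simp add: curv_form_Pair_0_right mixed_term_def psq_def pinner_def pRe_def algebra_simps)
qed

lemma curv_form_witness: "curv_form (((0, 1, 0, 0), 0), 0) (((1, 0, 0, 0), 0), (0, (1, 0, 0, 0))) = -24"
  by (simp add: curv_form_def numer_quad_def mixed_term_def psq_def pinner_def pRe_def zero_prod_def)

lemma no_local_isometry_fixing_0_by_curv_form:
  assumes "\<And>y. curv_form y w = 0" "curv_form x v \<noteq> 0"
  shows "\<not> (\<exists>S f. local_isometry_fixing S f 0 \<and> frechet_derivative f (at 0) v = w)"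
proof
  assume "\<exists>S f. local_isometry_fixing S f 0 \<and> frechet_derivative f (at 0) v = w"
  then obtain S f where "local_isometry_fixing S f 0" "frechet_derivative f (at 0) v = w"
    by blast
  then have "curv_form (frechet_derivative f (at 0) x) w = curv_form x v"
    using local_isometry_fixing_0_preserves_curv_form by metis
  with assms show False
    by simp
qed

theorem theorem9p5:
  shows "\<exists>P v w. P \<in> chart_dom \<and> v \<noteq> 0 \<and> w \<noteq> 0 \<and> metric_g P v v = metric_g P w w \<and>
           \<not> (\<exists>S f. local_isometry_fixing S f P \<and> frechet_derivative f (at P) v = w)"
proof -
  define v :: "poct \<times> poct" where "v = (((1, 0, 0, 0), 0), (0, (1, 0, 0, 0)))"
  define w :: "poct \<times> poct" where "w = (((1, 0, 0, 0), (1, 0, 0, 0)), 0)"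
  have "\<not> (\<exists>S f. local_isometry_fixing S f 0 \<and> frechet_derivative f (at 0) v = w)"
    using curv_form_null_right curv_form_witness unfolding v_def w_def
    by (intro no_local_isometry_fixing_0_by_curv_form[where x = "(((0, 1, 0, 0), 0), 0)"]) simp_all
  moreover have "metric_g 0 v v = metric_g 0 w w"
    by (simp add: metric_g_diag metric_q_eq v_def w_def flat_inner_def numer_quad_def mixed_term_def
        psq_def pinner_def pRe_def zero_prod_def)
  moreover have "(0 :: poct \<times> poct) \<in> chart_dom"
    by (simp add: chart_dom_iff flat_inner.zero_left)
  moreover have "v \<noteq> 0" "w \<noteq> 0"
    by (simp_all add: v_def w_def zero_prod_def)
  ultimately show ?thesis
    by blast
qed

end
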